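(* Let $\mathfrak g$ be a unimodular almost abelian Lie algebra with a Hermitian structure $(J,g)$, and let $e$ be an admissible frame with data $\lambda,v,A$ (so $\lambda+\operatorname{tr}A+\overline{\operatorname{tr}A}=0$). Then: (1) $s=-\lambda^2\le0$, and $s=0\iff Ric^{(1)}=0\iff\lambda=0$; (2) $\hat s=-2\lambda^2-|v|^2\le0$, and $\hat s=0\iff Ric^{(3)}=0\iff\lambda=0,\ v=0$; (3) $Ric^{(2)}=0\iff R=0\iff \lambda=0,\ v=0,\ [A,A^\ast]=0$.
   Context: Setup: Hermitian structure $(J,g)$ on a real Lie algebra $\mathfrak g$ of dimension $2n$ ($J$ integrable, $g$ a $J$-invariant inner product), viewed as left-invariant on the Lie group. $\mathfrak g^{1,0}=\{x-\sqrt{-1}Jx\}$, unitary frame $e_1,\dots,e_n$ of $\mathfrak g^{1,0}$ ($g(e_i,\bar e_j)=\delta_{ij}$, $g$ extended bilinearly), dual coframe $\varphi_i$, $d$ the Chevalley–Eilenberg differential. $\mathfrak g$ is unimodular if $\operatorname{tr}\mathrm{ad}_x=0$ for all $x$; almost abelian if non-abelian with an abelian ideal of codimension one. An admissible frame is a unitary frame with $d\varphi_1=-\lambda\,\varphi_1\wedge\bar\varphi_1$, $d\varphi_i=-\bar v_i\,\varphi_1\wedge\bar\varphi_1+\sum_{j=2}^n\overline{A_{ij}}(\varphi_1+\bar\varphi_1)\wedge\varphi_j$, $\lambda\in\mathbb R$, $v\in\mathbb C^{n-1}$, $A\in M_{n-1}(\mathbb C)$. $R$ denotes the curvature of the Chern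 connection (the unique connection preserving $J,g$ with torsion of vanishing $(1,1)$-part), $R_{i\bar jk\bar\ell}=g(R(e_i,\bar e_j)e_k,\bar e_\ell)$. Chern Ricci curvatures: $Ric^{(1)}_{i\bar j}=\sum_rR_{i\bar jr\bar r}$, $Ric^{(2)}_{i\bar j}=\sum_rR_{r\bar ri\bar j}$, $Ric^{(3)}_{i\bar j}=\sum_rR_{r\bar ji\bar r}$; Chern scalar curvature $s=\sum_iRic^{(1)}_{i\bar i}$; altered scalar curvature $\hat s=\sum_iRic^{(3)}_{i\bar i}$. *)

theory Defs
  imports Complex_Main
begin

(* Model: complexified Lie algebra g^C of a 2n-dim real Lie algebra with Hermitian
   structure, written in a unitary frame.  Basis index (k, False) = e_k,
   (k, True) = conj e_k, for k in {1..n}. *)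

type_synonym idx = "nat \<times> bool"
type_synonym sconst = "idx \<Rightarrow> idx \<Rightarrow> idx \<Rightarrow> complex"

definition Bn :: "nat \<Rightarrow> idx set" where
  "Bn n = {1..n} \<times> (UNIV :: bool set)"

definition cb :: "idx \<Rightarrow> idx" where
  "cb p = (fst p, \<not> snd p)"

(* c p q r = coefficient of basis vector r in [p, q] *)
definition bracket :: "nat \<Rightarrow> sconst \<Rightarrow> (idx \<Rightarrow> complex) \<Rightarrow> (idx \<Rightarrow> complex) \<Rightarrow> idx \<Rightarrow> complex" where
  "bracket n c x y = (\<lambda>r. \<Sum>p\<in>Bn n. \<Sum>q\<in>Bn n. x p * y q * c p q r)"

definition basisv :: "idx \<Rightarrow> idx \<Rightarrow> complex" where
  "basisv p = (\<lambda>q. if q = p then 1 else 0)"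

(* real vectors of g^C, i.e. the real Lie algebra g *)
definition realvec :: "nat \<Rightarrow> (idx \<Rightarrow> complex) \<Rightarrow> bool" where
  "realvec n x = (\<forall>p\<in>Bn n. x (cb p) = cnj (x p))"

(* J acts by i on e_k and by -i on conj e_k *)
definition Jev :: "idx \<Rightarrow> complex" where
  "Jev p = (if snd p then - \<i> else \<i>)"

(* g extended complex-bilinearly: g(e_i, conj e_j) = delta_ij, g(e_i,e_j) = 0 *)
definition gmet :: "idx \<Rightarrow> idx \<Rightarrow> complex" where
  "gmet p q = (if fst p = fst q \<and> snd p \<noteq> snd q then 1 else 0)"

(* (c defines the complexification of a real Lie algebra) and J is integrable *)
definition hermitian_lie :: "nat \<Rightarrow> sconst \<Rightarrow> bool" where
  "hermitian_lie n c \<longleftrightarrow>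
     (\<forall>p\<in>Bn n. \<forall>q\<in>Bn n. \<forall>r\<in>Bn n. c p q r = - c q p r) \<and>
     (\<forall>p\<in>Bn n. \<forall>q\<in>Bn n. \<forall>s\<in>Bn n. \<forall>t\<in>Bn n.
        (\<Sum>r\<in>Bn n. c q s r * c p r t + c s p r * c q r t + c p q r * c s r t) = 0) \<and>
     (\<forall>p\<in>Bn n. \<forall>q\<in>Bn n. \<forall>r\<in>Bn n. c (cb p) (cb q) (cb r) = cnj (c p q r)) \<and>
     (\<forall>i\<in>{1..n}. \<forall>j\<in>{1..n}. \<forall>k\<in>{1..n}. c (i, False) (j, False) (k, True) = 0)"

definition tr_ad :: "nat \<Rightarrow> sconst \<Rightarrow> (idx \<Rightarrow> complex) \<Rightarrow> complex" where
  "tr_ad n c x = (\<Sum>q\<in>Bn n. bracket n c x (basisv q) q)"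

definition unimodular :: "nat \<Rightarrow> sconst \<Rightarrow> bool" where
  "unimodular n c \<longleftrightarrow> (\<forall>x. realvec n x \<longrightarrow> tr_ad n c x = 0)"

definition pairing :: "nat \<Rightarrow> (idx \<Rightarrow> complex) \<Rightarrow> (idx \<Rightarrow> complex) \<Rightarrow> complex" where
  "pairing n a x = (\<Sum>p\<in>Bn n. a p * x p)"

definition abelian :: "nat \<Rightarrow> sconst \<Rightarrow> bool" where
  "abelian n c \<longleftrightarrow> (\<forall>x y. realvec n x \<longrightarrow> realvec n y \<longrightarrow> (\<forall>r\<in>Bn n. bracket n c x y r = 0))"

(* non-abelian, and there is an abelian ideal h of codimension one in g;
   h = kernel (on real vectors) of a nonzero real linear functional a *)
definition almost_abelian :: "nat \<Rightarrow> sconst \<Rightarrow> bool" where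
  "almost_abelian n c \<longleftrightarrow> \<not> abelian n c \<and>
     (\<exists>a. (\<forall>p\<in>Bn n. a (cb p) = cnj (a p)) \<and> (\<exists>p\<in>Bn n. a p \<noteq> 0) \<and>
        (\<forall>x y. realvec n x \<longrightarrow> realvec n y \<longrightarrow> pairing n a x = 0 \<longrightarrow>
            pairing n a (bracket n c x y) = 0 \<and>
            (pairing n a y = 0 \<longrightarrow> (\<forall>r\<in>Bn n. bracket n c x y r = 0))))"

(* coframe phi_k, conj phi_k, as coefficient functions of 1-forms *)
definition phi :: "nat \<Rightarrow> idx \<Rightarrow> complex" where
  "phi k = (\<lambda>p. if p = (k, False) then 1 else 0)"

definition phibar :: "nat \<Rightarrow> idx \<Rightarrow> complex" where
  "phibar k = (\<lambda>p. if p = (k, True) then 1 else 0)"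

(* Chevalley-Eilenberg differential of a 1-form: d alpha (x,y) = - alpha([x,y]),
   evaluated on basis vectors *)
definition dform :: "nat \<Rightarrow> sconst \<Rightarrow> (idx \<Rightarrow> complex) \<Rightarrow> idx \<Rightarrow> idx \<Rightarrow> complex" where
  "dform n c \<alpha> p q = - (\<Sum>r\<in>Bn n. \<alpha> r * c p q r)"

definition wedge :: "(idx \<Rightarrow> complex) \<Rightarrow> (idx \<Rightarrow> complex) \<Rightarrow> idx \<Rightarrow> idx \<Rightarrow> complex" where
  "wedge \<alpha> \<beta> p q = \<alpha> p * \<beta> q - \<alpha> q * \<beta> p"

definition admissible :: "nat \<Rightarrow> sconst \<Rightarrow> real \<Rightarrow> (nat \<Rightarrow> complex) \<Rightarrow> (nat \<Rightarrow> nat \<Rightarrow> complex) \<Rightarrow> bool" where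
  "admissible n c lam v A \<longleftrightarrow>
     (\<forall>p\<in>Bn n. \<forall>q\<in>Bn n.
        dform n c (phi 1) p q = - complex_of_real lam * wedge (phi 1) (phibar 1) p q \<and>
        (\<forall>i\<in>{2..n}. dform n c (phi i) p q =
            - cnj (v i) * wedge (phi 1) (phibar 1) p q
            + (\<Sum>j=2..n. cnj (A i j) * wedge (\<lambda>r. phi 1 r + phibar 1 r) (phi j) p q)))"

(* left-invariant connection, complex-bilinearly extended:
   nabla_{p} q = sum_r G p q r * (basis r).  Chern connection conditions. *)
definition is_chern :: "nat \<Rightarrow> sconst \<Rightarrow> sconst \<Rightarrow> bool" where
  "is_chern n c G \<longleftrightarrow>
     (\<forall>p q r. \<not> (p \<in> Bn n \<and> q \<in> Bn n \<and> r \<in> Bn n) \<longrightarrow> G p q r = 0) \<and>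
     (\<forall>p\<in>Bn n. \<forall>q\<in>Bn n. \<forall>r\<in>Bn n. G (cb p) (cb q) (cb r) = cnj (G p q r)) \<and>
     (\<forall>p\<in>Bn n. \<forall>q\<in>Bn n. \<forall>r\<in>Bn n. Jev q * G p q r = Jev r * G p q r) \<and>
     (\<forall>p\<in>Bn n. \<forall>q\<in>Bn n. \<forall>s\<in>Bn n.
        (\<Sum>r\<in>Bn n. G p q r * gmet r s) + (\<Sum>r\<in>Bn n. gmet q r * G p s r) = 0) \<and>
     (\<forall>i\<in>{1..n}. \<forall>j\<in>{1..n}. \<forall>r\<in>Bn n.
        G (i, False) (j, True) r - G (j, True) (i, False) r - c (i, False) (j, True) r = 0)"

definition chern :: "nat \<Rightarrow> sconst \<Rightarrow> sconst" where
  "chern n c = (THE G. is_chern n c G)"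

(* R(p,q)s = nabla_p nabla_q s - nabla_q nabla_p s - nabla_[p,q] s, component r *)
definition curv :: "nat \<Rightarrow> sconst \<Rightarrow> idx \<Rightarrow> idx \<Rightarrow> idx \<Rightarrow> idx \<Rightarrow> complex" where
  "curv n c p q s r = (let G = chern n c in
     \<Sum>t\<in>Bn n. G q s t * G p t r - G p s t * G q t r - c p q t * G t s r)"

(* R_{i jbar k lbar} = g(R(e_i, conj e_j) e_k, conj e_l) *)
definition Rcomp :: "nat \<Rightarrow> sconst \<Rightarrow> nat \<Rightarrow> nat \<Rightarrow> nat \<Rightarrow> nat \<Rightarrow> complex" where
  "Rcomp n c i j k l = (\<Sum>r\<in>Bn n. curv n c (i, False) (j, True) (k, False) r * gmet r (l, True))"

definition Ric1 :: "nat \<Rightarrow> sconst \<Rightarrow> nat \<Rightarrow> nat \<Rightarrow> complex" where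
  "Ric1 n c i j = (\<Sum>r=1..n. Rcomp n c i j r r)"

definition Ric2 :: "nat \<Rightarrow> sconst \<Rightarrow> nat \<Rightarrow> nat \<Rightarrow> complex" where
  "Ric2 n c i j = (\<Sum>r=1..n. Rcomp n c r r i j)"

definition Ric3 :: "nat \<Rightarrow> sconst \<Rightarrow> nat \<Rightarrow> nat \<Rightarrow> complex" where
  "Ric3 n c i j = (\<Sum>r=1..n. Rcomp n c r j i r)"

definition chern_scal :: "nat \<Rightarrow> sconst \<Rightarrow> complex" where
  "chern_scal n c = (\<Sum>i=1..n. Ric1 n c i i)"

definition alt_scal :: "nat \<Rightarrow> sconst \<Rightarrow> complex" where
  "alt_scal n c = (\<Sum>i=1..n. Ric3 n c i i)"

end

theory Submission
  imports Defs
begin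

text \<open>
  In a unitary frame the Chern connection of a Hermitian Lie algebra is explicit in the structure
  constants: for x, y of opposite type, \<open>\<nabla>\<^sub>x y\<close> is the component of [x, y] of the type of y
  (the torsion has no (1,1)-part), and for x, y of equal type it is forced by metricity.
  In an admissible frame no bracket other than [e_1, conj e_1] has a component along e_1 or
  conj e_1, and \<open>\<nabla>\<^sub>x\<close> vanishes unless x is e_1 or conj e_1. So the curvature is determined by
  R(e_1, conj e_1), which acts on g^{1,0} by K = D^* D - D D^* + \<lambda> (D + D^*), where D is the matrix
  of ad(conj e_1) on g^{1,0}. Consequently Ric^(2) = K, Ric^(3) is the first column of K, and
  Ric^(1) has tr K as its only entry. Unimodularity, \<lambda> + tr A + conj (tr A) = 0, gives
  tr K = -\<lambda>^2; directly K_11 = -2\<lambda>^2 - |v|^2; and for \<lambda> = 0, v = 0 the matrix K reduces to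
  the commutator [A, A^*] on e_2, ..., e_n.
\<close>

lemma mem_Bn_iff [simp]: "(k, b) \<in> Bn n \<longleftrightarrow> 1 \<le> k \<and> k \<le> n"
  by (simp add: Bn_def)

lemma finite_Bn [simp]: "finite (Bn n)"
  by (simp add: Bn_def)

lemma cb_pair [simp]: "cb (k, b) = (k, \<not> b)"
  by (simp add: cb_def)

lemma cb_cb [simp]: "cb (cb p) = p"
  by (simp add: cb_def)

lemma cb_mem_Bn_iff [simp]: "cb p \<in> Bn n \<longleftrightarrow> p \<in> Bn n"
  by (cases p) simp

lemma cb_eq_iff_eq_cb: "q = cb r \<longleftrightarrow> r = cb q"
  by (metis cb_cb)

lemma sum_Bn: "(\<Sum>p\<in>Bn n. f p) = (\<Sum>k=1..n. f (k, False) + f (k, True))"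
proof -
  have "(\<Sum>p\<in>Bn n. f p) = (\<Sum>k\<in>{1..n}. \<Sum>b\<in>UNIV. f (k, b))"
    unfolding Bn_def by (simp add: sum.cartesian_product)
  then show ?thesis
    by (simp add: UNIV_bool)
qed

lemma sum_Bn_cb: "(\<Sum>t\<in>Bn n. f (cb t)) = (\<Sum>t\<in>Bn n. f t)"
proof -
  have "bij_betw cb (Bn n) (Bn n)"
    by (rule bij_betw_byWitness[where f' = cb]) auto
  then show ?thesis
    by (rule sum.reindex_bij_betw)
qed

lemma sum_atLeastAtMost_split_first:
  fixes n :: nat
  shows "1 \<le> n \<Longrightarrow> (\<Sum>m=1..n. f m) = f 1 + (\<Sum>m=2..n. f m :: 'a :: comm_monoid_add)"
  using sum.atLeast_Suc_atMost[of 1 n f] by (simp add: numeral_2_eq_2)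

lemma sum_mult_delta:
  fixes f :: "'b \<Rightarrow> 'a :: semiring_1"
  assumes "finite S"
  shows "(\<Sum>j\<in>S. f j * (if k = j then 1 else 0)) = (if k \<in> S then f k else 0)"
    and "(\<Sum>j\<in>S. f j * (if j = k then 1 else 0)) = (if k \<in> S then f k else 0)"
  using assms by (simp_all add: if_distrib sum.delta sum.delta' cong: if_cong)

lemma gmet_eq_cb: "gmet r s = (if r = cb s then 1 else 0)"
  by (cases r; cases s) (auto simp: gmet_def)

lemma sum_mult_gmet_right:
  assumes "s \<in> Bn n"
  shows "(\<Sum>r\<in>Bn n. f r * gmet r s) = f (cb s)"
proof -
  have "(\<Sum>r\<in>Bn n. f r * gmet r s) = (\<Sum>r\<in>Bn n. if r = cb s then f r else 0)"
    by (rule sum.cong) (auto simp: gmet_eq_cb)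
  then show ?thesis
    using assms by simp
qed

lemma sum_gmet_mult_left:
  assumes "q \<in> Bn n"
  shows "(\<Sum>r\<in>Bn n. gmet q r * f r) = f (cb q)"
proof -
  have "(\<Sum>r\<in>Bn n. gmet q r * f r) = (\<Sum>r\<in>Bn n. if r = cb q then f r else 0)"
    by (rule sum.cong) (auto simp: gmet_eq_cb cb_eq_iff_eq_cb)
  then show ?thesis
    using assms by simp
qed

lemma Jev_eq_iff: "Jev p = Jev q \<longleftrightarrow> snd p = snd q"
  by (auto simp: Jev_def complex_eq_iff)

section \<open>The Chern connection in a unitary frame\<close>

definition chern_formula :: "nat \<Rightarrow> sconst \<Rightarrow> sconst" where
  "chern_formula n c p q r =
    (if p \<in> Bn n \<and> q \<in> Bn n \<and> r \<in> Bn n \<and> snd q = snd r then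
       (if snd p = snd q then - c p (cb r) (cb q) else c p q r)
     else 0)"

lemma hermitian_lie_antisym:
  "hermitian_lie n c \<Longrightarrow> p \<in> Bn n \<Longrightarrow> q \<in> Bn n \<Longrightarrow> r \<in> Bn n \<Longrightarrow> c p q r = - c q p r"
  unfolding hermitian_lie_def by blast

lemma hermitian_lie_cnj:
  "hermitian_lie n c \<Longrightarrow> p \<in> Bn n \<Longrightarrow> q \<in> Bn n \<Longrightarrow> r \<in> Bn n \<Longrightarrow>
    c (cb p) (cb q) (cb r) = cnj (c p q r)"
  unfolding hermitian_lie_def by blast

lemma is_chern_chern_formula:
  assumes H: "hermitian_lie n c"
  shows "is_chern n c (chern_formula n c)"
  unfolding is_chern_def
proof (intro conjI ballI allI impI)
  fix p q r
  assume "\<not> (p \<in> Bn n \<and> q \<in> Bn n \<and> r \<in> Bn n)"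
  then show "chern_formula n c p q r = 0"
    by (auto simp: chern_formula_def)
next
  fix p q r
  assume P: "p \<in> Bn n" "q \<in> Bn n" "r \<in> Bn n"
  obtain i x j y k z where pqr: "p = (i, x)" "q = (j, y)" "r = (k, z)"
    by (cases p; cases q; cases r)
  have "c (cb p) (cb q) (cb r) = cnj (c p q r)" "c (cb p) r q = cnj (c p (cb r) (cb q))"
    using hermitian_lie_cnj[OF H, of p q r] hermitian_lie_cnj[OF H, of p "cb r" "cb q"] P by simp_all
  then show "chern_formula n c (cb p) (cb q) (cb r) = cnj (chern_formula n c p q r)"
    using P unfolding pqr by (cases x; cases y; cases z) (simp_all add: chern_formula_def)
next
  fix p q r
  show "Jev q * chern_formula n c p q r = Jev r * chern_formula n c p q r"
    by (cases "snd q = snd r") (simp_all add: Jev_eq_iff chern_formula_def)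
next
  fix p q s
  assume P: "p \<in> Bn n" "q \<in> Bn n" "s \<in> Bn n"
  obtain i x j y k z where pqs: "p = (i, x)" "q = (j, y)" "s = (k, z)"
    by (cases p; cases q; cases s)
  have "chern_formula n c p q (cb s) + chern_formula n c p s (cb q) = 0"
    using P unfolding pqs by (cases x; cases y; cases z) (simp_all add: chern_formula_def)
  then show "(\<Sum>r\<in>Bn n. chern_formula n c p q r * gmet r s)
      + (\<Sum>r\<in>Bn n. gmet q r * chern_formula n c p s r) = 0"
    using P by (simp add: sum_mult_gmet_right sum_gmet_mult_left)
next
  fix i j r
  assume P: "i \<in> {1..n}" "j \<in> {1..n}" "r \<in> Bn n"
  then have "c (j, True) (i, False) r = - c (i, False) (j, True) r"
    by (intro hermitian_lie_antisym[OF H]) auto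
  then show "chern_formula n c (i, False) (j, True) r - chern_formula n c (j, True) (i, False) r
      - c (i, False) (j, True) r = 0"
    using P by (cases "snd r") (simp_all add: chern_formula_def)
qed

lemma is_chern_preserves_type:
  assumes G: "is_chern n c G"
    and P: "p \<in> Bn n" "q \<in> Bn n" "r \<in> Bn n" "snd q \<noteq> snd r"
  shows "G p q r = 0"
proof -
  have "Jev q * G p q r = Jev r * G p q r"
    using G P unfolding is_chern_def by blast
  moreover have "Jev q \<noteq> Jev r"
    using P Jev_eq_iff by blast
  ultimately show ?thesis
    by simp
qed

lemma is_chern_mixed_type:
  assumes H: "hermitian_lie n c" and G: "is_chern n c G"
    and P: "p \<in> Bn n" "q \<in> Bn n" "r \<in> Bn n" "snd p \<noteq> snd q" "snd q = snd r"
  shows "G p q r = c p q r"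
proof -
  obtain i bp j bq where pq: "p = (i, bp)" "q = (j, bq)"
    by (cases p; cases q)
  have tor: "G (i', False) (j', True) r - G (j', True) (i', False) r - c (i', False) (j', True) r = 0"
    if "i' \<in> {1..n}" "j' \<in> {1..n}" for i' j'
    using G P that unfolding is_chern_def by blast
  show ?thesis
  proof (cases bp)
    case True
    then have "G (j, False) (i, True) r = 0" "c (j, False) (i, True) r = - c (i, True) (j, False) r"
      using is_chern_preserves_type[OF G, of "(j, False)" "(i, True)" r]
        hermitian_lie_antisym[OF H, of "(j, False)" "(i, True)" r] P pq by auto
    then show ?thesis
      using tor[of j i] P pq True by auto
  next
    case False
    then have "G (j, True) (i, False) r = 0"
      using is_chern_preserves_type[OF G, of "(j, True)" "(i, False)" r] P pq by auto
    then show ?thesis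
      using tor[of i j] P pq False by auto
  qed
qed

lemma is_chern_unique:
  assumes H: "hermitian_lie n c" and G: "is_chern n c G"
  shows "G = chern_formula n c"
proof (intro ext)
  fix p q r
  consider "\<not> (p \<in> Bn n \<and> q \<in> Bn n \<and> r \<in> Bn n)"
    | "p \<in> Bn n" "q \<in> Bn n" "r \<in> Bn n" "snd q \<noteq> snd r"
    | "p \<in> Bn n" "q \<in> Bn n" "r \<in> Bn n" "snd q = snd r" "snd p \<noteq> snd q"
    | "p \<in> Bn n" "q \<in> Bn n" "r \<in> Bn n" "snd q = snd r" "snd p = snd q"
    by blast
  then show "G p q r = chern_formula n c p q r"
  proof cases
    case 1
    then show ?thesis
      using G unfolding is_chern_def chern_formula_def by metis
  next
    case 2
    then show ?thesis
      using is_chern_preserves_type[OF G] by (simp add: chern_formula_def)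
  next
    case 3
    then show ?thesis
      using is_chern_mixed_type[OF H G] by (simp add: chern_formula_def)
  next
    case 4
    have "(\<Sum>t\<in>Bn n. G p q t * gmet t (cb r)) + (\<Sum>t\<in>Bn n. gmet q t * G p (cb r) t) = 0"
      using G 4 unfolding is_chern_def by simp
    then have "G p q r = - G p (cb r) (cb q)"
      using 4 by (simp add: sum_mult_gmet_right sum_gmet_mult_left eq_neg_iff_add_eq_0)
    moreover have "G p (cb r) (cb q) = c p (cb r) (cb q)"
      using is_chern_mixed_type[OF H G, of p "cb r" "cb q"] 4 by (cases r; cases q) auto
    ultimately show ?thesis
      using 4 by (simp add: chern_formula_def)
  qed
qed

lemma chern_eq_chern_formula: "hermitian_lie n c \<Longrightarrow> chern n c = chern_formula n c"
  unfolding chern_def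
  by (rule the_equality) (simp_all add: is_chern_chern_formula is_chern_unique)

section \<open>Structure constants in an admissible frame\<close>

locale admissible_frame =
  fixes n :: nat and c :: sconst and lam :: real
    and v :: "nat \<Rightarrow> complex" and A :: "nat \<Rightarrow> nat \<Rightarrow> complex"
  assumes hermitian: "hermitian_lie n c"
    and admissible: "admissible n c lam v A"
begin

text \<open>\<open>D k l\<close> and \<open>E k l\<close> are the e_l-coefficients of [conj e_1, e_k] and [e_1, e_k], read off
  from the defining equations of an admissible frame.\<close>

definition D :: "nat \<Rightarrow> nat \<Rightarrow> complex" where
  "D k l = (if k = 1 then (if l = 1 then - of_real lam else - cnj (v l))
            else (if l = 1 then 0 else - cnj (A l k)))"

definition E :: "nat \<Rightarrow> nat \<Rightarrow> complex" where
  "E k l = (if k = 1 \<or> l = 1 then 0 else - cnj (A l k))"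

lemma c_antisym: "p \<in> Bn n \<Longrightarrow> q \<in> Bn n \<Longrightarrow> r \<in> Bn n \<Longrightarrow> c p q r = - c q p r"
  by (rule hermitian_lie_antisym[OF hermitian])

lemma c_eq_cnj_cb: "p \<in> Bn n \<Longrightarrow> q \<in> Bn n \<Longrightarrow> r \<in> Bn n \<Longrightarrow> c p q r = cnj (c (cb p) (cb q) (cb r))"
  using hermitian_lie_cnj[OF hermitian, of "cb p" "cb q" "cb r"] by simp

lemma dform_phi:
  assumes "1 \<le> l" "l \<le> n"
  shows "dform n c (phi l) p q = - c p q (l, False)"
proof -
  have "(\<Sum>r\<in>Bn n. phi l r * c p q r) = (\<Sum>r\<in>Bn n. if r = (l, False) then c p q r else 0)"
    by (rule sum.cong) (auto simp: phi_def)
  then show ?thesis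
    using assms by (simp add: dform_def)
qed

lemma c_e1_component:
  "p \<in> Bn n \<Longrightarrow> q \<in> Bn n \<Longrightarrow> c p q (1, False) = of_real lam * wedge (phi 1) (phibar 1) p q"
  using admissible dform_phi[of 1 p q] by (auto simp: admissible_def Bn_def)

lemma c_ek_component:
  assumes "p \<in> Bn n" "q \<in> Bn n" "2 \<le> l" "l \<le> n"
  shows "c p q (l, False) = cnj (v l) * wedge (phi 1) (phibar 1) p q
      - (\<Sum>j=2..n. cnj (A l j) * wedge (\<lambda>r. phi 1 r + phibar 1 r) (phi j) p q)"
proof -
  have "dform n c (phi l) p q = - cnj (v l) * wedge (phi 1) (phibar 1) p q
            + (\<Sum>j=2..n. cnj (A l j) * wedge (\<lambda>r. phi 1 r + phibar 1 r) (phi j) p q)"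
    using admissible assms by (auto simp: admissible_def)
  moreover have "dform n c (phi l) p q = - c p q (l, False)"
    using assms by (intro dform_phi) auto
  ultimately show ?thesis
    by (simp add: algebra_simps)
qed

lemma c_ebar1_ek:
  assumes "1 \<le> k" "k \<le> n" "1 \<le> l" "l \<le> n"
  shows "c (1, True) (k, False) (l, False) = D k l"
proof (cases "l = 1")
  case True
  then show ?thesis
    using assms c_e1_component[of "(1, True)" "(k, False)"]
    by (simp add: D_def wedge_def phi_def phibar_def)
next
  case False
  then show ?thesis
    using assms c_ek_component[of "(1, True)" "(k, False)" l]
    by (simp add: D_def wedge_def phi_def phibar_def sum_mult_delta)
qed

lemma c_e1_ek:
  assumes "1 \<le> k" "k \<le> n" "1 \<le> l" "l \<le> n"
  shows "c (1, False) (k, False) (l, False) = E k l"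
proof -
  consider "k = 1" | "k \<noteq> 1" "l = 1" | "k \<noteq> 1" "2 \<le> l"
    using assms by linarith
  then show ?thesis
  proof cases
    case 1
    then show ?thesis
      using c_antisym[of "(1, False)" "(1, False)" "(l, False)"] assms by (simp add: E_def)
  next
    case 2
    then show ?thesis
      using assms c_e1_component[of "(1, False)" "(k, False)"]
      by (simp add: E_def wedge_def phi_def phibar_def)
  next
    case 3
    then show ?thesis
      using assms c_ek_component[of "(1, False)" "(k, False)" l]
      by (simp add: E_def wedge_def phi_def phibar_def sum_mult_delta)
  qed
qed

lemma c_no_e1_component:
  "p \<in> Bn n \<Longrightarrow> q \<in> Bn n \<Longrightarrow> fst p \<noteq> 1 \<Longrightarrow> c p q (1, False) = 0"
  using c_e1_component by (cases p) (simp add: wedge_def phi_def phibar_def)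

lemma c_no_ebar1_component:
  assumes "p \<in> Bn n" "q \<in> Bn n" "fst p \<noteq> 1"
  shows "c p q (1, True) = 0"
proof -
  have "(1, True) \<in> Bn n"
    using assms by (cases p) auto
  then have "c p q (1, True) = cnj (c (cb p) (cb q) (1, False))"
    using c_eq_cnj_cb[of p q "(1, True)"] assms by simp
  also have "\<dots> = 0"
    using c_no_e1_component[of "cb p" "cb q"] assms by (cases p) auto
  finally show ?thesis .
qed

lemma c_ebar_ek_vanish:
  assumes "a \<noteq> 1" "(a, True) \<in> Bn n" "(j, False) \<in> Bn n" "(k, False) \<in> Bn n"
  shows "c (a, True) (j, False) (k, False) = 0"
proof (cases "k = 1")
  case True
  then show ?thesis
    using assms c_no_e1_component[of "(a, True)" "(j, False)"] by simp
next
  case False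
  then show ?thesis
    using assms c_ek_component[of "(a, True)" "(j, False)" k] by (simp add: wedge_def phi_def phibar_def)
qed

lemma c_mixed_type_vanish:
  assumes "p \<in> Bn n" "q \<in> Bn n" "r \<in> Bn n" "fst p \<noteq> 1" "snd p \<noteq> snd q" "snd q = snd r"
  shows "c p q r = 0"
proof -
  obtain i bp j bq k br where pqr: "p = (i, bp)" "q = (j, bq)" "r = (k, br)"
    by (cases p; cases q; cases r)
  show ?thesis
  proof (cases bp)
    case True
    then show ?thesis
      using assms pqr c_ebar_ek_vanish[of i j k] by auto
  next
    case False
    then have "c p q r = cnj (c (i, True) (j, False) (k, False))"
      using assms pqr c_eq_cnj_cb[of p q r] by auto
    then show ?thesis
      using c_ebar_ek_vanish[of i j k] assms pqr False by auto
  qed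
qed

lemma chern_formula_vanish:
  assumes "fst p \<noteq> 1"
  shows "chern_formula n c p q r = 0"
proof (cases "p \<in> Bn n \<and> q \<in> Bn n \<and> r \<in> Bn n \<and> snd q = snd r")
  case True
  then have "c p q r = 0" if "snd p \<noteq> snd q"
    using that assms by (intro c_mixed_type_vanish) auto
  moreover have "c p (cb r) (cb q) = 0" if "snd p = snd q"
    using True that assms by (intro c_mixed_type_vanish) (cases r; cases q; auto)+
  ultimately show ?thesis
    by (simp add: chern_formula_def)
qed (auto simp: chern_formula_def)

section \<open>Curvature in an admissible frame\<close>

lemma chern_formula_cnj: "chern_formula n c (cb p) (cb q) (cb r) = cnj (chern_formula n c p q r)"
proof (cases "p \<in> Bn n \<and> q \<in> Bn n \<and> r \<in> Bn n")
  case True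
  then show ?thesis
    using is_chern_chern_formula[OF hermitian] unfolding is_chern_def by blast
qed (auto simp: chern_formula_def)

lemma curv_eq_chern_formula: "curv n c p q s r =
   (\<Sum>t\<in>Bn n. chern_formula n c q s t * chern_formula n c p t r
      - chern_formula n c p s t * chern_formula n c q t r - c p q t * chern_formula n c t s r)"
  by (simp add: curv_def chern_eq_chern_formula[OF hermitian] Let_def)

lemma curv_antisym: "p \<in> Bn n \<Longrightarrow> q \<in> Bn n \<Longrightarrow> curv n c p q s r = - curv n c q p s r"
  unfolding curv_eq_chern_formula sum_negf[symmetric]
  by (rule sum.cong) (auto simp: c_antisym[of p q] algebra_simps)

lemma curv_vanish:
  assumes "p \<in> Bn n" "q \<in> Bn n" "fst p \<noteq> 1"
  shows "curv n c p q s r = 0"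
  unfolding curv_eq_chern_formula
proof (rule sum.neutral, rule ballI)
  fix t
  assume "t \<in> Bn n"
  have "c p q t * chern_formula n c t s r = 0"
  proof (cases "fst t = 1")
    case True
    then obtain b where "t = (1, b)"
      by (cases t) auto
    then show ?thesis
      using c_no_e1_component[OF assms] c_no_ebar1_component[OF assms] by (cases b) auto
  qed (simp add: chern_formula_vanish)
  then show "chern_formula n c q s t * chern_formula n c p t r
      - chern_formula n c p s t * chern_formula n c q t r - c p q t * chern_formula n c t s r = 0"
    using chern_formula_vanish[OF assms(3)] by simp
qed

lemma curv_preserves_type: "snd s \<noteq> snd r \<Longrightarrow> curv n c p q s r = 0"
  unfolding curv_eq_chern_formula by (rule sum.neutral) (auto simp: chern_formula_def)

lemma curv_cnj:
  assumes "p \<in> Bn n" "q \<in> Bn n"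
  shows "curv n c (cb p) (cb q) (cb s) (cb r) = cnj (curv n c p q s r)"
proof -
  have "curv n c (cb p) (cb q) (cb s) (cb r) =
    (\<Sum>t\<in>Bn n. chern_formula n c (cb q) (cb s) (cb t) * chern_formula n c (cb p) (cb t) (cb r)
      - chern_formula n c (cb p) (cb s) (cb t) * chern_formula n c (cb q) (cb t) (cb r)
      - c (cb p) (cb q) (cb t) * chern_formula n c (cb t) (cb s) (cb r))"
    unfolding curv_eq_chern_formula by (rule sum_Bn_cb[symmetric])
  also have "\<dots> = cnj (curv n c p q s r)"
    unfolding curv_eq_chern_formula cnj_sum
    by (rule sum.cong) (auto simp: chern_formula_cnj hermitian_lie_cnj[OF hermitian] assms)
  finally show ?thesis .
qed

definition K :: "nat \<Rightarrow> nat \<Rightarrow> complex" where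
  "K k l = (\<Sum>m=1..n. cnj (D m k) * D m l - D k m * cnj (D l m)) + of_real lam * (cnj (D l k) + D k l)"

lemma curv_e1_ebar1:
  assumes "1 \<le> k" "k \<le> n" "1 \<le> l" "l \<le> n"
  shows "curv n c (1, False) (1, True) (k, False) (l, False) = K k l"
proof -
  have n_pos: "1 \<le> n"
    using assms by simp
  have c11: "c (1, False) (1, True) (1, False) = of_real lam"
    using c_antisym[of "(1, False)" "(1, True)" "(1, False)"] c_ebar1_ek[of 1 1] n_pos by (simp add: D_def)
  have c11': "c (1, False) (1, True) (1, True) = - of_real lam"
    using c_eq_cnj_cb[of "(1, False)" "(1, True)" "(1, True)"] c_ebar1_ek[of 1 1] n_pos by (simp add: D_def)
  have nabla_ebar1: "chern_formula n c (1, True) (x, False) (y, False) = D x y"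
    if "1 \<le> x" "x \<le> n" "1 \<le> y" "y \<le> n" for x y
    using that n_pos c_ebar1_ek[of x y] by (simp add: chern_formula_def)
  have nabla_e1: "chern_formula n c (1, False) (x, False) (y, False) = - cnj (D y x)"
    if "1 \<le> x" "x \<le> n" "1 \<le> y" "y \<le> n" for x y
    using that n_pos c_ebar1_ek[of y x] c_eq_cnj_cb[of "(1, False)" "(y, True)" "(x, True)"]
    by (simp add: chern_formula_def)
  define f where "f t = chern_formula n c (1, True) (k, False) t * chern_formula n c (1, False) t (l, False)
      - chern_formula n c (1, False) (k, False) t * chern_formula n c (1, True) t (l, False)
      - c (1, False) (1, True) t * chern_formula n c t (k, False) (l, False)" for t
  have f_pair: "f (m, False) + f (m, True) = cnj (D m k) * D m l - D k m * cnj (D l m)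
      + (if m = 1 then of_real lam * (cnj (D l k) + D k l) else 0)"
    if "1 \<le> m" "m \<le> n" for m
  proof (cases "m = 1")
    case True
    then show ?thesis
      using that assms nabla_ebar1 nabla_e1 c11 c11'
      by (simp add: f_def chern_formula_def algebra_simps)
  next
    case False
    then have "chern_formula n c (m, False) (k, False) (l, False) = 0"
      "chern_formula n c (m, True) (k, False) (l, False) = 0"
      by (simp_all add: chern_formula_vanish)
    then show ?thesis
      using that assms nabla_ebar1 nabla_e1 False
      by (simp add: f_def chern_formula_def algebra_simps)
  qed
  have "curv n c (1, False) (1, True) (k, False) (l, False) = (\<Sum>m=1..n. f (m, False) + f (m, True))"
    unfolding curv_eq_chern_formula sum_Bn f_def ..
  also have "\<dots> = K k l"
    using n_pos by (simp add: f_pair sum.distrib K_def)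
  finally show ?thesis .
qed

lemma curv_vanish_unless_e1_ebar1:
  assumes "i \<in> {1..n}" "j \<in> {1..n}" "\<not> (i = 1 \<and> j = 1)"
  shows "curv n c (i, False) (j, True) s r = 0"
proof (cases "i = 1")
  case True
  then have "curv n c (j, True) (i, False) s r = 0"
    using assms by (intro curv_vanish) auto
  then show ?thesis
    using assms curv_antisym[of "(i, False)" "(j, True)" s r] by simp
qed (use assms in \<open>auto intro: curv_vanish\<close>)

lemma Rcomp_eq_curv: "l \<in> {1..n} \<Longrightarrow> Rcomp n c i j k l = curv n c (i, False) (j, True) (k, False) (l, False)"
  unfolding Rcomp_def by (subst sum_mult_gmet_right) auto

lemma Ric1_eq:
  assumes "i \<in> {1..n}" "j \<in> {1..n}"
  shows "Ric1 n c i j = (if i = 1 \<and> j = 1 then (\<Sum>r=1..n. K r r) else 0)"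
proof -
  have "Rcomp n c i j r r = (if i = 1 \<and> j = 1 then K r r else 0)" if "r \<in> {1..n}" for r
    using assms that curv_vanish_unless_e1_ebar1[of i j] curv_e1_ebar1[of r r]
    by (simp add: Rcomp_eq_curv)
  then have "Ric1 n c i j = (\<Sum>r=1..n. if i = 1 \<and> j = 1 then K r r else 0)"
    unfolding Ric1_def by (rule sum.cong[OF refl])
  then show ?thesis
    by (cases "i = 1"; cases "j = 1") simp_all
qed

lemma Ric2_eq:
  assumes "i \<in> {1..n}" "j \<in> {1..n}"
  shows "Ric2 n c i j = K i j"
proof -
  have "Rcomp n c r r i j = (if r = 1 then K i j else 0)" if "r \<in> {1..n}" for r
    using assms that curv_vanish_unless_e1_ebar1[of r r] curv_e1_ebar1[of i j]
    by (simp add: Rcomp_eq_curv)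
  then have "Ric2 n c i j = (\<Sum>r=1..n. if r = 1 then K i j else 0)"
    unfolding Ric2_def by (rule sum.cong[OF refl])
  then show ?thesis
    using assms by simp
qed

lemma Ric3_eq:
  assumes "i \<in> {1..n}" "j \<in> {1..n}"
  shows "Ric3 n c i j = (if j = 1 then K i 1 else 0)"
proof -
  have "Rcomp n c r j i r = (if r = 1 then (if j = 1 then K i 1 else 0) else 0)" if "r \<in> {1..n}" for r
    using assms that curv_vanish_unless_e1_ebar1[of r j] curv_e1_ebar1[of i 1]
    by (cases "r = 1") (simp_all add: Rcomp_eq_curv)
  then have "Ric3 n c i j = (\<Sum>r=1..n. if r = 1 then (if j = 1 then K i 1 else 0) else 0)"
    unfolding Ric3_def by (rule sum.cong[OF refl])
  then show ?thesis
    using assms by simp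
qed

lemma curv_e1_ebar1_eq_0:
  assumes K0: "\<forall>k\<in>{1..n}. \<forall>l\<in>{1..n}. K k l = 0" and P: "s \<in> Bn n" "r \<in> Bn n"
  shows "curv n c (1, False) (1, True) s r = 0"
proof -
  obtain k bs l br where sr: "s = (k, bs)" "r = (l, br)"
    by (cases s; cases r)
  have kl: "k \<in> {1..n}" "l \<in> {1..n}"
    using P sr by auto
  then have n_pos: "1 \<le> n"
    by simp
  have curv0: "curv n c (1, False) (1, True) (k, False) (l, False) = 0"
    using K0 kl curv_e1_ebar1 by simp
  consider "bs \<noteq> br" | "bs = False" "br = False" | "bs = True" "br = True"
    by blast
  then show ?thesis
  proof cases
    case 1
    then show ?thesis
      using sr by (intro curv_preserves_type) simp
  next
    case 2
    then show ?thesis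
      using sr curv0 by simp
  next
    case 3
    have "curv n c (1, False) (1, True) s r = cnj (curv n c (1, True) (1, False) (k, False) (l, False))"
      using curv_cnj[of "(1, True)" "(1, False)" "(k, False)" "(l, False)"] n_pos sr 3 by simp
    also have "\<dots> = 0"
      using curv_antisym[of "(1, True)" "(1, False)" "(k, False)" "(l, False)"] n_pos curv0 by simp
    finally show ?thesis .
  qed
qed

lemma flat_iff_K_eq_0:
  "(\<forall>p\<in>Bn n. \<forall>q\<in>Bn n. \<forall>s\<in>Bn n. \<forall>r\<in>Bn n. curv n c p q s r = 0) \<longleftrightarrow>
   (\<forall>k\<in>{1..n}. \<forall>l\<in>{1..n}. K k l = 0)"
proof
  assume "\<forall>p\<in>Bn n. \<forall>q\<in>Bn n. \<forall>s\<in>Bn n. \<forall>r\<in>Bn n. curv n c p q s r = 0"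
  then show "\<forall>k\<in>{1..n}. \<forall>l\<in>{1..n}. K k l = 0"
    using curv_e1_ebar1 by force
next
  assume K0: "\<forall>k\<in>{1..n}. \<forall>l\<in>{1..n}. K k l = 0"
  show "\<forall>p\<in>Bn n. \<forall>q\<in>Bn n. \<forall>s\<in>Bn n. \<forall>r\<in>Bn n. curv n c p q s r = 0"
  proof (intro ballI)
    fix p q s r
    assume P: "p \<in> Bn n" "q \<in> Bn n" "s \<in> Bn n" "r \<in> Bn n"
    obtain i bp j bq where pq: "p = (i, bp)" "q = (j, bq)"
      by (cases p; cases q)
    consider "i \<noteq> 1" | "j \<noteq> 1" | "p = q" | "p = (1, False)" "q = (1, True)" | "p = (1, True)" "q = (1, False)"
      using pq by (cases bp; cases bq) auto
    then show "curv n c p q s r = 0"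
    proof cases
      case 1
      then show ?thesis
        using P pq by (intro curv_vanish) auto
    next
      case 2
      then have "curv n c q p s r = 0"
        using P pq by (intro curv_vanish) auto
      then show ?thesis
        using curv_antisym[of p q s r] P by simp
    next
      case 3
      then show ?thesis
        using curv_antisym[of p p s r] P by simp
    next
      case 4
      then show ?thesis
        using curv_e1_ebar1_eq_0[OF K0] P by simp
    next
      case 5
      then show ?thesis
        using curv_e1_ebar1_eq_0[OF K0] curv_antisym[of p q s r] P by simp
    qed
  qed
qed

lemma D_eq_of_lam_v_eq_0:
  assumes "lam = 0" "\<forall>i\<in>{2..n}. v i = 0" "l \<in> {1..n}"
  shows "D k l = (if k = 1 \<or> l = 1 then 0 else - cnj (A l k))"
  unfolding D_def using assms by auto

lemma K_eq_commutator:
  assumes lv: "lam = 0" "\<forall>i\<in>{2..n}. v i = 0" and kl: "k \<in> {1..n}" "l \<in> {1..n}"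
  shows "K k l = (if k = 1 \<or> l = 1 then 0 else (\<Sum>m=2..n. A k m * cnj (A l m) - cnj (A m k) * A m l))"
proof -
  have D': "D a b = (if a = 1 \<or> b = 1 then 0 else - cnj (A b a))" if "b \<in> {1..n}" for a b
    using D_eq_of_lam_v_eq_0[OF lv that] .
  have "K k l = (\<Sum>m=1..n. cnj (D m k) * D m l - D k m * cnj (D l m))"
    unfolding K_def using lv by simp
  also have "\<dots> = (\<Sum>m=2..n. cnj (D m k) * D m l - D k m * cnj (D l m))"
    using kl by (subst sum_atLeastAtMost_split_first) (simp_all add: D')
  also have "\<dots> = (\<Sum>m=2..n. if k = 1 \<or> l = 1 then 0 else A k m * cnj (A l m) - cnj (A m k) * A m l)"
    using kl by (intro sum.cong) (auto simp: D')
  finally show ?thesis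
    by simp
qed

lemma K_11:
  assumes "1 \<le> n"
  shows "K 1 1 = of_real (- 2 * lam ^ 2 - (\<Sum>i=2..n. (cmod (v i))\<^sup>2))"
proof -
  have "cnj (D m 1) * D m 1 - D 1 m * cnj (D 1 m) = - of_real ((cmod (v m))\<^sup>2)" if "m \<in> {2..n}" for m
  proof -
    have "v m * cnj (v m) = (of_real (cmod (v m)))\<^sup>2"
      using complex_norm_square[of "v m"] by (simp only: of_real_power)
    then show ?thesis
      using that by (simp add: D_def mult.commute)
  qed
  then have "K 1 1 = - (\<Sum>m=2..n. of_real ((cmod (v m))\<^sup>2)) + of_real lam * (- 2 * of_real lam)"
    unfolding K_def sum_atLeastAtMost_split_first[OF assms] by (simp add: D_def sum_negf)
  then show ?thesis
    by (simp add: power2_eq_square)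
qed

end

section \<open>Unimodularity and the Ricci curvatures\<close>

lemma tr_ad_e1_plus_ebar1:
  assumes "1 \<le> n"
  shows "tr_ad n c (\<lambda>p. if p = (1, False) \<or> p = (1, True) then 1 else 0)
    = (\<Sum>q\<in>Bn n. c (1, False) q q + c (1, True) q q)"
proof -
  define x :: "idx \<Rightarrow> complex" where "x p = (if p = (1, False) \<or> p = (1, True) then 1 else 0)" for p
  have "bracket n c x (basisv q) q = c (1, False) q q + c (1, True) q q" if "q \<in> Bn n" for q
  proof -
    have "(\<Sum>p'\<in>Bn n. x p * basisv q p' * c p p' q) = x p * c p q q" for p
    proof -
      have "(\<Sum>p'\<in>Bn n. x p * basisv q p' * c p p' q) = (\<Sum>p'\<in>Bn n. if p' = q then x p * c p q q else 0)"
        by (rule sum.cong) (auto simp: basisv_def)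
      then show ?thesis
        using that by simp
    qed
    then have "bracket n c x (basisv q) q = (\<Sum>p\<in>Bn n. x p * c p q q)"
      unfolding bracket_def by simp
    also have "\<dots> = (\<Sum>k=1..n. x (k, False) * c (k, False) q q + x (k, True) * c (k, True) q q)"
      by (rule sum_Bn)
    also have "\<dots> = (\<Sum>k=1..n. if k = 1 then c (1, False) q q + c (1, True) q q else 0)"
      by (rule sum.cong) (auto simp: x_def)
    finally show ?thesis
      using assms by simp
  qed
  then show ?thesis
    unfolding tr_ad_def x_def[abs_def] by (rule sum.cong[OF refl])
qed

context admissible_frame
begin

lemma trace_condition:
  assumes "unimodular n c" and n_pos: "1 \<le> n"
  shows "of_real lam + (\<Sum>k=2..n. A k k + cnj (A k k)) = 0"
proof -
  define x :: "idx \<Rightarrow> complex" where "x p = (if p = (1, False) \<or> p = (1, True) then 1 else 0)" for p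
  have "realvec n x"
    unfolding realvec_def x_def by (auto simp: cb_def)
  then have tr0: "tr_ad n c x = 0"
    using assms(1) unfolding unimodular_def by blast
  have "c (1, False) (k, False) (k, False) + c (1, True) (k, False) (k, False)
      + (c (1, False) (k, True) (k, True) + c (1, True) (k, True) (k, True))
      = E k k + D k k + cnj (D k k) + cnj (E k k)" if "k \<in> {1..n}" for k
    using that n_pos c_e1_ek[of k k] c_ebar1_ek[of k k]
      c_eq_cnj_cb[of "(1, False)" "(k, True)" "(k, True)"] c_eq_cnj_cb[of "(1, True)" "(k, True)" "(k, True)"]
    by simp
  then have "tr_ad n c x = (\<Sum>k=1..n. E k k + D k k + cnj (D k k) + cnj (E k k))"
    unfolding x_def tr_ad_e1_plus_ebar1[OF n_pos] sum_Bn by (rule sum.cong[OF refl])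
  also have "\<dots> = - 2 * of_real lam + (\<Sum>k=2..n. - 2 * (A k k + cnj (A k k)))"
  proof -
    have "(\<Sum>k=2..n. E k k + D k k + cnj (D k k) + cnj (E k k)) = (\<Sum>k=2..n. - 2 * (A k k + cnj (A k k)))"
      by (rule sum.cong) (auto simp: E_def D_def)
    then show ?thesis
      unfolding sum_atLeastAtMost_split_first[OF n_pos] by (simp add: E_def D_def)
  qed
  finally have "- 2 * (of_real lam + (\<Sum>k=2..n. A k k + cnj (A k k))) = 0"
    using tr0 by (simp add: sum_distrib_left distrib_left)
  then show ?thesis
    by (metis mult_eq_0_iff neg_equal_0_iff_equal zero_neq_numeral)
qed

lemma trace_K:
  assumes "unimodular n c" and n_pos: "1 \<le> n"
  shows "(\<Sum>r=1..n. K r r) = of_real (- (lam ^ 2))"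
proof -
  define h where "h a b = cnj (D a b) * D a b" for a b
  have "(\<Sum>r=1..n. K r r) = (\<Sum>r=1..n. \<Sum>m=1..n. h m r) - (\<Sum>r=1..n. \<Sum>m=1..n. h r m)
      + of_real lam * (\<Sum>r=1..n. cnj (D r r) + D r r)"
    unfolding K_def h_def
    by (simp add: sum.distrib sum_subtractf sum_distrib_left distrib_left mult.commute)
  also have "(\<Sum>r=1..n. \<Sum>m=1..n. h m r) = (\<Sum>r=1..n. \<Sum>m=1..n. h r m)"
    by (rule sum.swap)
  also have "(\<Sum>r=1..n. cnj (D r r) + D r r) = - of_real lam"
  proof -
    have "(\<Sum>r=2..n. cnj (D r r) + D r r) = (\<Sum>r=2..n. - (A r r + cnj (A r r)))"
      by (rule sum.cong) (auto simp: D_def)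
    also have "\<dots> = - (\<Sum>r=2..n. A r r + cnj (A r r))"
      by (rule sum_negf)
    also have "\<dots> = of_real lam"
      using trace_condition[OF assms] add_eq_0_iff2 by metis
    finally show ?thesis
      unfolding sum_atLeastAtMost_split_first[OF n_pos] by (simp add: D_def)
  qed
  finally show ?thesis
    by (simp add: power2_eq_square)
qed

lemma K_11_eq_0_iff:
  assumes "1 \<le> n"
  shows "K 1 1 = 0 \<longleftrightarrow> lam = 0 \<and> (\<forall>i\<in>{2..n}. v i = 0)"
proof -
  have "K 1 1 = 0 \<longleftrightarrow> 2 * lam ^ 2 + (\<Sum>i=2..n. (cmod (v i))\<^sup>2) = 0"
    unfolding K_11[OF assms] of_real_eq_0_iff by linarith
  also have "\<dots> \<longleftrightarrow> 2 * lam ^ 2 = 0 \<and> (\<Sum>i=2..n. (cmod (v i))\<^sup>2) = 0"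
    by (rule add_nonneg_eq_0_iff) (simp_all add: sum_nonneg)
  also have "\<dots> \<longleftrightarrow> lam = 0 \<and> (\<forall>i\<in>{2..n}. v i = 0)"
    by (simp add: sum_nonneg_eq_0_iff)
  finally show ?thesis .
qed

lemma chern_scal_eq:
  assumes "unimodular n c" and "1 \<le> n"
  shows "chern_scal n c = of_real (- (lam ^ 2))"
proof -
  have "chern_scal n c = (\<Sum>i=1..n. if i = 1 then (\<Sum>r=1..n. K r r) else 0)"
    unfolding chern_scal_def by (rule sum.cong) (simp_all add: Ric1_eq)
  then show ?thesis
    using assms trace_K[OF assms] by simp
qed

lemma alt_scal_eq_K_11:
  assumes "1 \<le> n"
  shows "alt_scal n c = K 1 1"
proof -
  have "alt_scal n c = (\<Sum>i=1..n. if i = 1 then K 1 1 else 0)"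
    unfolding alt_scal_def by (rule sum.cong) (auto simp: Ric3_eq)
  then show ?thesis
    using assms by simp
qed

lemma Ric1_eq_0_iff:
  assumes "unimodular n c" and "1 \<le> n"
  shows "(\<forall>i\<in>{1..n}. \<forall>j\<in>{1..n}. Ric1 n c i j = 0) \<longleftrightarrow> lam = 0"
proof -
  have "(\<forall>i\<in>{1..n}. \<forall>j\<in>{1..n}. Ric1 n c i j = 0) \<longleftrightarrow> (\<Sum>r=1..n. K r r) = 0"
    using assms(2) by (auto simp: Ric1_eq)
  then show ?thesis
    using trace_K[OF assms] by simp
qed

lemma Ric3_eq_0_iff:
  assumes "1 \<le> n"
  shows "(\<forall>i\<in>{1..n}. \<forall>j\<in>{1..n}. Ric3 n c i j = 0) \<longleftrightarrow> lam = 0 \<and> (\<forall>i\<in>{2..n}. v i = 0)"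
proof
  assume "\<forall>i\<in>{1..n}. \<forall>j\<in>{1..n}. Ric3 n c i j = 0"
  then have "K 1 1 = 0"
    using assms Ric3_eq[of 1 1] by simp
  then show "lam = 0 \<and> (\<forall>i\<in>{2..n}. v i = 0)"
    using K_11_eq_0_iff[OF assms] by blast
next
  assume "lam = 0 \<and> (\<forall>i\<in>{2..n}. v i = 0)"
  then have "K i 1 = 0" if "i \<in> {1..n}" for i
    using K_eq_commutator[of i 1] that assms by simp
  then show "\<forall>i\<in>{1..n}. \<forall>j\<in>{1..n}. Ric3 n c i j = 0"
    by (simp add: Ric3_eq)
qed

lemma Ric2_eq_0_iff_K_eq_0:
  "(\<forall>i\<in>{1..n}. \<forall>j\<in>{1..n}. Ric2 n c i j = 0) \<longleftrightarrow> (\<forall>k\<in>{1..n}. \<forall>l\<in>{1..n}. K k l = 0)"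
  by (simp add: Ric2_eq)

lemma K_eq_0_iff:
  assumes "1 \<le> n"
  shows "(\<forall>k\<in>{1..n}. \<forall>l\<in>{1..n}. K k l = 0) \<longleftrightarrow>
    lam = 0 \<and> (\<forall>i\<in>{2..n}. v i = 0) \<and>
    (\<forall>i\<in>{2..n}. \<forall>j\<in>{2..n}. (\<Sum>k=2..n. A i k * cnj (A j k) - cnj (A k i) * A k j) = 0)"
proof
  assume K0: "\<forall>k\<in>{1..n}. \<forall>l\<in>{1..n}. K k l = 0"
  then have lv: "lam = 0 \<and> (\<forall>i\<in>{2..n}. v i = 0)"
    using assms K_11_eq_0_iff by auto
  moreover have "(\<Sum>k=2..n. A i k * cnj (A j k) - cnj (A k i) * A k j) = 0"
    if "i \<in> {2..n}" "j \<in> {2..n}" for i j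
    using K0 K_eq_commutator[of i j] lv that by auto
  ultimately show "lam = 0 \<and> (\<forall>i\<in>{2..n}. v i = 0) \<and>
    (\<forall>i\<in>{2..n}. \<forall>j\<in>{2..n}. (\<Sum>k=2..n. A i k * cnj (A j k) - cnj (A k i) * A k j) = 0)"
    by blast
next
  assume "lam = 0 \<and> (\<forall>i\<in>{2..n}. v i = 0) \<and>
    (\<forall>i\<in>{2..n}. \<forall>j\<in>{2..n}. (\<Sum>k=2..n. A i k * cnj (A j k) - cnj (A k i) * A k j) = 0)"
  then have "K k l = 0" if "k \<in> {1..n}" "l \<in> {1..n}" for k l
    using K_eq_commutator[OF _ _ that] that by (cases "k = 1 \<or> l = 1") auto
  then show "\<forall>k\<in>{1..n}. \<forall>l\<in>{1..n}. K k l = 0"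
    by blast
qed

end

lemma almost_abelian_dim_pos: "almost_abelian n c \<Longrightarrow> 1 \<le> n"
  unfolding almost_abelian_def by (auto simp: Bn_def)

theorem lemma7:
  fixes n :: nat and c :: sconst and lam :: real
    and v :: "nat \<Rightarrow> complex" and A :: "nat \<Rightarrow> nat \<Rightarrow> complex"
  assumes "hermitian_lie n c"
    and "unimodular n c"
    and "almost_abelian n c"
    and "admissible n c lam v A"
  shows
    "(chern_scal n c = complex_of_real (- (lam ^ 2)) \<and> - (lam ^ 2) \<le> 0 \<and>
      (chern_scal n c = 0 \<longleftrightarrow> lam = 0) \<and>
      ((\<forall>i\<in>{1..n}. \<forall>j\<in>{1..n}. Ric1 n c i j = 0) \<longleftrightarrow> lam = 0))
   \<and> (alt_scal n c = complex_of_real (- 2 * lam ^ 2 - (\<Sum>i=2..n. (cmod (v i))\<^sup>2)) \<and>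
      - 2 * lam ^ 2 - (\<Sum>i=2..n. (cmod (v i))\<^sup>2) \<le> 0 \<and>
      (alt_scal n c = 0 \<longleftrightarrow> lam = 0 \<and> (\<forall>i\<in>{2..n}. v i = 0)) \<and>
      ((\<forall>i\<in>{1..n}. \<forall>j\<in>{1..n}. Ric3 n c i j = 0) \<longleftrightarrow> lam = 0 \<and> (\<forall>i\<in>{2..n}. v i = 0)))
   \<and> (((\<forall>i\<in>{1..n}. \<forall>j\<in>{1..n}. Ric2 n c i j = 0) \<longleftrightarrow>
         (\<forall>p\<in>Bn n. \<forall>q\<in>Bn n. \<forall>s\<in>Bn n. \<forall>r\<in>Bn n. curv n c p q s r = 0)) \<and>
      ((\<forall>p\<in>Bn n. \<forall>q\<in>Bn n. \<forall>s\<in>Bn n. \<forall>r\<in>Bn n. curv n c p q s r = 0) \<longleftrightarrow>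
         lam = 0 \<and> (\<forall>i\<in>{2..n}. v i = 0) \<and>
         (\<forall>i\<in>{2..n}. \<forall>j\<in>{2..n}.
            (\<Sum>k=2..n. A i k * cnj (A j k) - cnj (A k i) * A k j) = 0)))"
proof -
  interpret admissible_frame n c lam v A
    using assms(1,4) by unfold_locales
  \<comment> \<open>Almost abelianness is only needed for n \<ge> 1; the rest of it is encoded in the admissible frame.\<close>
  have n_pos: "1 \<le> n"
    using assms(3) by (rule almost_abelian_dim_pos)
  have scal: "chern_scal n c = of_real (- (lam ^ 2))"
    by (rule chern_scal_eq[OF assms(2) n_pos])
  have alt_scal: "alt_scal n c = of_real (- 2 * lam ^ 2 - (\<Sum>i=2..n. (cmod (v i))\<^sup>2))"
    using alt_scal_eq_K_11[OF n_pos] K_11[OF n_pos] by simp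
  have "- 2 * lam ^ 2 - (\<Sum>i=2..n. (cmod (v i))\<^sup>2) \<le> 0"
    using sum_nonneg[of "{2..n}" "\<lambda>i. (cmod (v i))\<^sup>2", OF zero_le_power2] zero_le_power2[of lam]
    by linarith
  moreover have "alt_scal n c = 0 \<longleftrightarrow> lam = 0 \<and> (\<forall>i\<in>{2..n}. v i = 0)"
    using alt_scal_eq_K_11[OF n_pos] K_11_eq_0_iff[OF n_pos] by simp
  ultimately show ?thesis
    using scal alt_scal Ric1_eq_0_iff[OF assms(2) n_pos] Ric3_eq_0_iff[OF n_pos]
      Ric2_eq_0_iff_K_eq_0 flat_iff_K_eq_0 K_eq_0_iff[OF n_pos]
    by simp
qed

end
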